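(* Let $\hat q$ be an $n\times n$ parametric matrix and $\hat p$ an $n\times n$ parametric matrix, and let $M$ be an $n\times n$ $(\hat q,\hat p)$-Manin matrix with entries in $\mathfrak R$. Then for every multi-index $I=(i_1,\dots,i_n)$ with entries in $\{1,\dots,n\}$, $$\sum_{\sigma\in S_n}\varepsilon(\hat q,\sigma)\,M_{\sigma(1),i_1}M_{\sigma(2),i_2}\cdots M_{\sigma(n),i_n}=\varepsilon(\hat p,I)\,\mathrm{cdet}_{\hat q}(M).$$
   Context: $\mathfrak R$ is an associative unital algebra over $\mathbb C$. A parametric $n\times n$ matrix is a matrix $\hat q=(q_{ij})$ of nonzero complex numbers with $q_{ij}q_{ji}=1$ and $q_{ii}=1$. For parametric matrices $\hat q$ ($n\times n$) and $\hat p$ ($m\times m$), an $n\times m$ matrix $M=(M_{ij})$ with entries in $\mathfrak R$ is a $(\hat q,\hat p)$-Manin matrix if $M_{ik}M_{jk}=q_{ji}M_{jk}M_{ik}$ for all $1\le i<j\le n$, $1\le k\le m$, and $M_{ik}M_{jl}-q_{ji}p_{kl}M_{jl}M_{ik}+p_{kl}M_{il}M_{jk}-q_{ji}M_{jk}M_{il}=0$ for all $i<j$, $k<l$. For a multi-index $I=(i_1,\dots,i_r)$, $\varepsilon(\hat q,I)=0$ if two entries of $I$ coincide, and otherwise $\varepsilon(\hat q,I)=\prod_{s<t,\ i_s>i_t}(-q_{i_si_t})$. For $\sigma\in S_n$, $\varepsilon(\hat q,\sigma)=\prod_{s<t,\ \sigma(s)>\sigma(t)}(-q_{\sigma(s)\sigma(t)})$.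 The column $\hat q$-determinant of an $n\times n$ matrix $M$ is $\mathrm{cdet}_{\hat q}(M)=\sum_{\sigma\in S_n}\varepsilon(\hat q,\sigma)M_{\sigma(1),1}\cdots M_{\sigma(n),n}$. *)

theory Defs
  imports Complex_Main "HOL-Combinatorics.Permutations"
begin

text \<open>Indices are 0-based: {1..n} of the paper is rendered as {..<n}.
  The unital associative C-algebra R is a type 'a :: ring_1 together with a
  unital ring homomorphism emb : C -> R whose image is central (scalars).\<close>

definition c_algebra_emb :: "(complex \<Rightarrow> 'a::ring_1) \<Rightarrow> bool" where
  "c_algebra_emb emb \<longleftrightarrow> emb 1 = 1 \<and>
     (\<forall>a b. emb (a + b) = emb a + emb b) \<and>
     (\<forall>a b. emb (a * b) = emb a * emb b) \<and>
     (\<forall>a x. emb a * x = x * emb a)"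

definition parametric_matrix :: "nat \<Rightarrow> (nat \<Rightarrow> nat \<Rightarrow> complex) \<Rightarrow> bool" where
  "parametric_matrix n q \<longleftrightarrow> (\<forall>i<n. \<forall>j<n. q i j \<noteq> 0 \<and> q i j * q j i = 1) \<and> (\<forall>i<n. q i i = 1)"

definition manin ::
  "(complex \<Rightarrow> 'a::ring_1) \<Rightarrow> nat \<Rightarrow> nat \<Rightarrow> (nat \<Rightarrow> nat \<Rightarrow> complex) \<Rightarrow> (nat \<Rightarrow> nat \<Rightarrow> complex)
     \<Rightarrow> (nat \<Rightarrow> nat \<Rightarrow> 'a) \<Rightarrow> bool" where
  "manin emb n m q p M \<longleftrightarrow>
     (\<forall>i j k. i < j \<and> j < n \<and> k < m \<longrightarrow>
        M i k * M j k = emb (q j i) * M j k * M i k) \<and>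
     (\<forall>i j k l. i < j \<and> j < n \<and> k < l \<and> l < m \<longrightarrow>
        M i k * M j l - emb (q j i * p k l) * M j l * M i k
        + emb (p k l) * M i l * M j k - emb (q j i) * M j k * M i l = 0)"

definition eps :: "(nat \<Rightarrow> nat \<Rightarrow> complex) \<Rightarrow> nat \<Rightarrow> (nat \<Rightarrow> nat) \<Rightarrow> complex" where
  "eps q r I = (if inj_on I {..<r} then
      (\<Prod>(s,t)\<in>{(s,t). s < t \<and> t < r \<and> I t < I s}. - q (I s) (I t)) else 0)"

definition cdet :: "(complex \<Rightarrow> 'a::ring_1) \<Rightarrow> (nat \<Rightarrow> nat \<Rightarrow> complex) \<Rightarrow> nat
     \<Rightarrow> (nat \<Rightarrow> nat \<Rightarrow> 'a) \<Rightarrow> 'a" where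
  "cdet emb q n M = (\<Sum>\<sigma> | \<sigma> permutes {..<n}.
      emb (eps q n \<sigma>) * prod_list (map (\<lambda>k. M (\<sigma> k) k) [0..<n]))"

end

theory Submission
  imports Defs
begin

text \<open>Write D(J) for the left-hand side with column multi-index J, so that D(id) is the
  column q-determinant. Pairing every \<sigma> with \<sigma> \<circ> (s s+1) and using
  eps(q, \<sigma> \<circ> (s s+1)) = - q(j,i) eps(q, \<sigma>) for i = \<sigma>(s) < j = \<sigma>(s+1) groups D(J)
  into terms containing M(i,k) M(j,l) - q(j,i) M(j,k) M(i,l), where k = J(s) and l = J(s+1).
  The Manin relations turn this into 0 when k = l, and into - p(k,l) times the corresponding
  expression for J \<circ> (s s+1) when k < l. Sorting J by adjacent transpositions, by induction on
  its number of inversions, multiplies eps(p, J) by the same factors, and a sorted J either has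
  two equal adjacent entries (both sides vanish) or is the identity.\<close>

definition inversions :: "nat \<Rightarrow> (nat \<Rightarrow> nat) \<Rightarrow> (nat \<times> nat) set" where
  "inversions n I = {(s, t). s < t \<and> t < n \<and> I t < I s}"

lemma finite_inversions: "finite (inversions n I)"
  by (rule finite_subset[of _ "{..<n} \<times> {..<n}"]) (auto simp: inversions_def)

lemma eps_eq_prod_inversions:
  "eps q n I = (if inj_on I {..<n} then \<Prod>(s, t)\<in>inversions n I. - q (I s) (I t) else 0)"
  by (simp add: eps_def inversions_def)

lemma transpose_Suc_less:
  "a < b \<Longrightarrow> (a, b) \<noteq> (s, Suc s) \<Longrightarrow> transpose s (Suc s) a < transpose s (Suc s) b"
  by (auto simp: transpose_def)

lemma transpose_Suc_lessThan: "Suc s < n \<Longrightarrow> b < n \<Longrightarrow> transpose s (Suc s) b < n"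
  by (auto simp: transpose_def)

lemma transpose_Suc_mem_inversions:
  assumes "Suc s < n" "I s < I (Suc s)"
  shows "(transpose s (Suc s) a, transpose s (Suc s) b) \<in> inversions n I
           \<longleftrightarrow> (a, b) \<in> inversions n (I \<circ> transpose s (Suc s)) \<and> (a, b) \<noteq> (s, Suc s)"
    (is "(?\<tau> a, ?\<tau> b) \<in> _ \<longleftrightarrow> _")
proof
  assume "(?\<tau> a, ?\<tau> b) \<in> inversions n I"
  then have "?\<tau> a < ?\<tau> b" "?\<tau> b < n" "I (?\<tau> b) < I (?\<tau> a)"
    by (auto simp: inversions_def)
  moreover from this have "(?\<tau> a, ?\<tau> b) \<noteq> (s, Suc s)"
    using assms(2) by auto
  ultimately show "(a, b) \<in> inversions n (I \<circ> ?\<tau>) \<and> (a, b) \<noteq> (s, Suc s)"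
    using transpose_Suc_less[of "?\<tau> a" "?\<tau> b" s] transpose_Suc_lessThan[OF assms(1), of "?\<tau> b"]
    by (auto simp: inversions_def)
next
  assume "(a, b) \<in> inversions n (I \<circ> ?\<tau>) \<and> (a, b) \<noteq> (s, Suc s)"
  then show "(?\<tau> a, ?\<tau> b) \<in> inversions n I"
    using transpose_Suc_less[of a b s] transpose_Suc_lessThan[OF assms(1), of b]
    by (auto simp: inversions_def)
qed

lemma bij_betw_inversions_comp_transpose:
  assumes "Suc s < n" "I s < I (Suc s)"
  shows "bij_betw (map_prod (transpose s (Suc s)) (transpose s (Suc s)))
           (inversions n (I \<circ> transpose s (Suc s)) - {(s, Suc s)}) (inversions n I)"
    (is "bij_betw ?f ?A ?B")
proof (rule bij_betw_byWitness[where f' = ?f])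
  show "?f ` ?A \<subseteq> ?B"
    using transpose_Suc_mem_inversions[OF assms] by auto
  show "?f ` ?B \<subseteq> ?A"
  proof (rule image_subsetI)
    fix x assume "x \<in> ?B"
    then show "?f x \<in> ?A"
      using transpose_Suc_mem_inversions[OF assms,
          of "transpose s (Suc s) (fst x)" "transpose s (Suc s) (snd x)"]
      by (cases x) simp
  qed
qed auto

lemma adjacent_mem_inversions_comp_transpose:
  "Suc s < n \<Longrightarrow> I s < I (Suc s) \<Longrightarrow> (s, Suc s) \<in> inversions n (I \<circ> transpose s (Suc s))"
  by (simp add: inversions_def)

lemma card_inversions_comp_transpose:
  assumes "Suc s < n" "I s < I (Suc s)"
  shows "card (inversions n (I \<circ> transpose s (Suc s))) = Suc (card (inversions n I))"
proof -
  have "card (inversions n (I \<circ> transpose s (Suc s)))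
      = Suc (card (inversions n (I \<circ> transpose s (Suc s)) - {(s, Suc s)}))"
    using card.remove[OF finite_inversions adjacent_mem_inversions_comp_transpose[OF assms]] .
  also have "\<dots> = Suc (card (inversions n I))"
    using bij_betw_same_card[OF bij_betw_inversions_comp_transpose[OF assms]] by simp
  finally show ?thesis .
qed

lemma inj_on_comp_permutes_iff: "\<pi> permutes S \<Longrightarrow> inj_on (I \<circ> \<pi>) S \<longleftrightarrow> inj_on I S"
  by (metis comp_inj_on_iff permutes_image permutes_inj_on)

lemma eps_comp_transpose:
  assumes "Suc s < n" "I s < I (Suc s)"
  shows "eps q n (I \<circ> transpose s (Suc s)) = - q (I (Suc s)) (I s) * eps q n I"
proof -
  let ?\<tau> = "transpose s (Suc s)"
  have inj_iff: "inj_on (I \<circ> ?\<tau>) {..<n} \<longleftrightarrow> inj_on I {..<n}"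
    using assms(1) by (intro inj_on_comp_permutes_iff permutes_swap_id) auto
  have "(\<Prod>(a, b)\<in>inversions n (I \<circ> ?\<tau>). - q (I (?\<tau> a)) (I (?\<tau> b)))
      = - q (I (Suc s)) (I s)
        * (\<Prod>(a, b)\<in>inversions n (I \<circ> ?\<tau>) - {(s, Suc s)}. - q (I (?\<tau> a)) (I (?\<tau> b)))"
    using prod.remove[OF finite_inversions adjacent_mem_inversions_comp_transpose[OF assms],
        of "\<lambda>(a, b). - q (I (?\<tau> a)) (I (?\<tau> b))"]
    by simp
  also have "(\<Prod>(a, b)\<in>inversions n (I \<circ> ?\<tau>) - {(s, Suc s)}. - q (I (?\<tau> a)) (I (?\<tau> b)))
      = (\<Prod>(a, b)\<in>inversions n I. - q (I a) (I b))"
    using prod.reindex_bij_betw[OF bij_betw_inversions_comp_transpose[OF assms],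
        of "\<lambda>(a, b). - q (I a) (I b)"]
    by (simp add: case_prod_beta)
  finally show ?thesis
    unfolding eps_eq_prod_inversions inj_iff by (simp add: comp_def)
qed

lemma inversions_empty_iff:
  "inversions n I = {} \<longleftrightarrow> (\<forall>a b. a < b \<longrightarrow> b < n \<longrightarrow> I a \<le> I b)"
  unfolding inversions_def using not_less by fastforce

lemma adjacent_descent_if_inversions:
  assumes "inversions n I \<noteq> {}"
  obtains s where "Suc s < n" "I (Suc s) < I s"
proof -
  obtain a b where "a < b" "b < n" "I b < I a"
    using assms by (auto simp: inversions_def)
  moreover have "a < b \<Longrightarrow> b < n \<Longrightarrow> I b < I a \<Longrightarrow> \<exists>s. Suc s < n \<and> I (Suc s) < I s" for a
  proof (induction b arbitrary: a)
    case (Suc b)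
    show ?case
    proof (cases "I (Suc b) < I b")
      case False
      with Suc.prems have "a < b" "I b < I a"
        by (metis less_SucE not_less order.strict_trans2)+
      with Suc show ?thesis by simp
    qed (use Suc.prems in auto)
  qed simp
  ultimately show ?thesis
    using that by blast
qed

lemma strict_mono_lessThan_eq_self:
  fixes I :: "nat \<Rightarrow> nat"
  assumes "\<forall>a b. a < b \<longrightarrow> b < n \<longrightarrow> I a < I b" "\<forall>k<n. I k < n" "k < n"
  shows "I k = k"
proof -
  have "sorted_wrt (<) (map I [0..<n])"
    using assms(1) by (simp add: sorted_wrt_iff_nth_less)
  then have sorted: "sorted (map I [0..<n])" and distinct: "distinct (map I [0..<n])"
    by (simp_all add: strict_sorted_iff)
  have "set (map I [0..<n]) = {..<n}"
  proof (rule card_subset_eq)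
    show "card (set (map I [0..<n])) = card {..<n}"
      using distinct_card[OF distinct] by simp
  qed (use assms(2) in auto)
  then have "map I [0..<n] = [0..<n]"
    using sorted distinct by (intro sorted_distinct_set_unique) (auto simp: lessThan_atLeast0)
  then have "map I [0..<n] ! k = [0..<n] ! k"
    by simp
  then show ?thesis
    using assms(3) by simp
qed

lemma sum_permutes_pair_transpose:
  fixes g :: "('a::linorder \<Rightarrow> 'a) \<Rightarrow> 'b::comm_monoid_add"
  assumes "finite S" "a \<in> S" "b \<in> S" "a \<noteq> b"
  shows "(\<Sum>\<sigma> | \<sigma> permutes S. g \<sigma>)
       = (\<Sum>\<sigma> | \<sigma> permutes S \<and> \<sigma> a < \<sigma> b. g \<sigma> + g (\<sigma> \<circ> transpose a b))"
proof -
  let ?A = "{\<sigma>. \<sigma> permutes S \<and> \<sigma> a < \<sigma> b}"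
  let ?B = "{\<sigma>. \<sigma> permutes S \<and> \<sigma> b < \<sigma> a}"
  have \<tau>: "transpose a b permutes S"
    using assms by (simp add: permutes_swap_id)
  have fin: "finite {\<sigma>. \<sigma> permutes S}"
    using assms(1) by (rule finite_permutations)
  have "\<sigma> a \<noteq> \<sigma> b" if "\<sigma> permutes S" for \<sigma>
    using assms(4) permutes_inj[OF that] by (auto dest: injD)
  then have "{\<sigma>. \<sigma> permutes S} = ?A \<union> ?B"
    using not_less_iff_gr_or_eq by blast
  then have "(\<Sum>\<sigma> | \<sigma> permutes S. g \<sigma>) = sum g (?A \<union> ?B)"
    by (simp only:)
  also have "\<dots> = sum g ?A + sum g ?B"
    by (rule sum.union_disjoint) (auto intro: finite_subset[OF _ fin])
  also have "sum g ?B = (\<Sum>\<sigma>\<in>?A. g (\<sigma> \<circ> transpose a b))"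
  proof (rule sum.reindex_bij_witness[where i = "\<lambda>\<sigma>. \<sigma> \<circ> transpose a b"
        and j = "\<lambda>\<sigma>. \<sigma> \<circ> transpose a b"])
    fix \<sigma> assume "\<sigma> \<in> ?B"
    then show "\<sigma> \<circ> transpose a b \<in> ?A"
      using permutes_compose[OF \<tau>] by simp
  next
    fix \<sigma> assume "\<sigma> \<in> ?A"
    then show "\<sigma> \<circ> transpose a b \<in> ?B"
      using permutes_compose[OF \<tau>] by simp
  qed (simp_all add: comp_assoc)
  finally show ?thesis
    by (simp only: sum.distrib)
qed

lemma prod_list_map_upt_split_adjacent:
  assumes "Suc s < n"
  shows "prod_list (map f [0..<n])
       = prod_list (map f [0..<s]) * (f s * f (Suc s)) * prod_list (map f [Suc (Suc s)..<n])"
proof -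
  have "[0..<n] = [0..<s] @ s # Suc s # [Suc (Suc s)..<n]"
    using assms upt_add_eq_append[of 0 s "n - s"] by (simp add: upt_conv_Cons)
  then show ?thesis
    by (simp add: mult.assoc)
qed

definition cdet_cols :: "(complex \<Rightarrow> 'a::ring_1) \<Rightarrow> (nat \<Rightarrow> nat \<Rightarrow> complex) \<Rightarrow> nat
     \<Rightarrow> (nat \<Rightarrow> nat \<Rightarrow> 'a) \<Rightarrow> (nat \<Rightarrow> nat) \<Rightarrow> 'a" where
  "cdet_cols emb q n M J = (\<Sum>\<sigma> | \<sigma> permutes {..<n}.
      emb (eps q n \<sigma>) * prod_list (map (\<lambda>k. M (\<sigma> k) (J k)) [0..<n]))"

lemma cdet_eq_cdet_cols_id: "cdet emb q n M = cdet_cols emb q n M id"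
  by (simp add: cdet_def cdet_cols_def)

context
  fixes emb :: "complex \<Rightarrow> 'a::ring_1"
  assumes emb: "c_algebra_emb emb"
begin

lemma emb_1: "emb 1 = 1"
  using emb unfolding c_algebra_emb_def by blast

lemma emb_add: "emb (a + b) = emb a + emb b"
  using emb unfolding c_algebra_emb_def by blast

lemma emb_mult: "emb (a * b) = emb a * emb b"
  using emb unfolding c_algebra_emb_def by blast

lemma emb_central: "emb a * x = x * emb a"
  using emb unfolding c_algebra_emb_def by blast

lemma emb_0: "emb 0 = 0"
  using emb_add[of 0 0] by simp

lemma emb_uminus: "emb (- a) = - emb a"
  using emb_add[of a "- a"] by (simp add: emb_0 neg_eq_iff_add_eq_0[symmetric])

lemma emb_left_commute: "emb a * (emb b * x) = emb b * (emb a * x)"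
  by (metis emb_central mult.assoc)

lemma emb_central_middle: "X * (emb c * Z) * Y = emb c * (X * Z * Y)"
  by (metis emb_central mult.assoc)

lemma cdet_cols_pair_adjacent:
  assumes "Suc s < n"
  shows "cdet_cols emb q n M J = (\<Sum>\<sigma> | \<sigma> permutes {..<n} \<and> \<sigma> s < \<sigma> (Suc s).
     emb (eps q n \<sigma>) * (prod_list (map (\<lambda>k. M (\<sigma> k) (J k)) [0..<s])
       * (M (\<sigma> s) (J s) * M (\<sigma> (Suc s)) (J (Suc s))
          - emb (q (\<sigma> (Suc s)) (\<sigma> s)) * (M (\<sigma> (Suc s)) (J s) * M (\<sigma> s) (J (Suc s))))
       * prod_list (map (\<lambda>k. M (\<sigma> k) (J k)) [Suc (Suc s)..<n])))"
    (is "_ = ?rhs")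
proof -
  let ?\<tau> = "transpose s (Suc s)"
  let ?t = "\<lambda>\<sigma>. emb (eps q n \<sigma>) * prod_list (map (\<lambda>k. M (\<sigma> k) (J k)) [0..<n])"
  have "cdet_cols emb q n M J
      = (\<Sum>\<sigma> | \<sigma> permutes {..<n} \<and> \<sigma> s < \<sigma> (Suc s). ?t \<sigma> + ?t (\<sigma> \<circ> ?\<tau>))"
    unfolding cdet_cols_def using assms by (intro sum_permutes_pair_transpose) auto
  also have "\<dots> = ?rhs"
  proof (rule sum.cong[OF refl], goal_cases)
    case (1 \<sigma>)
    then have \<sigma>: "\<sigma> s < \<sigma> (Suc s)" by simp
    define X where "X = prod_list (map (\<lambda>k. M (\<sigma> k) (J k)) [0..<s])"
    define Y where "Y = prod_list (map (\<lambda>k. M (\<sigma> k) (J k)) [Suc (Suc s)..<n])"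
    define A where "A = M (\<sigma> s) (J s) * M (\<sigma> (Suc s)) (J (Suc s))"
    define B where "B = M (\<sigma> (Suc s)) (J s) * M (\<sigma> s) (J (Suc s))"
    define c where "c = q (\<sigma> (Suc s)) (\<sigma> s)"
    define e where "e = eps q n \<sigma>"
    have outer: "prod_list (map (\<lambda>k. M (\<sigma> (?\<tau> k)) (J k)) [0..<s]) = X"
        "prod_list (map (\<lambda>k. M (\<sigma> (?\<tau> k)) (J k)) [Suc (Suc s)..<n]) = Y"
      unfolding X_def Y_def by (auto intro!: arg_cong[where f = prod_list] map_cong)
    have "prod_list (map (\<lambda>k. M (\<sigma> k) (J k)) [0..<n]) = X * A * Y"
      unfolding X_def Y_def A_def by (rule prod_list_map_upt_split_adjacent[OF assms])
    moreover have "prod_list (map (\<lambda>k. M ((\<sigma> \<circ> ?\<tau>) k) (J k)) [0..<n]) = X * B * Y"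
      unfolding B_def prod_list_map_upt_split_adjacent[OF assms] comp_apply outer by simp
    moreover have "emb (eps q n (\<sigma> \<circ> ?\<tau>)) = - (emb c * emb e)"
      unfolding c_def e_def eps_comp_transpose[OF assms \<sigma>] by (simp add: emb_uminus emb_mult)
    moreover have "X * (A - emb c * B) * Y = X * A * Y - emb c * (X * B * Y)"
      by (simp add: right_diff_distrib left_diff_distrib emb_central_middle)
    ultimately show ?case
      unfolding A_def[symmetric] B_def[symmetric] c_def[symmetric] e_def[symmetric]
        X_def[symmetric] Y_def[symmetric]
      by (simp add: right_diff_distrib mult.assoc emb_left_commute)
  qed
  finally show ?thesis .
qed

lemma cdet_cols_eq_0_if_adjacent_cols_eq:
  assumes "manin emb n m q p M" "Suc s < n" "J s = J (Suc s)" "J s < m"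
  shows "cdet_cols emb q n M J = 0"
  unfolding cdet_cols_pair_adjacent[OF assms(2)]
proof (rule sum.neutral, rule ballI, goal_cases)
  case (1 \<sigma>)
  then have "\<sigma> s < \<sigma> (Suc s)" "\<sigma> (Suc s) < n"
    using assms(2) permutes_in_image[of \<sigma> "{..<n}"] by auto
  then have "M (\<sigma> s) (J s) * M (\<sigma> (Suc s)) (J s)
      = emb (q (\<sigma> (Suc s)) (\<sigma> s)) * (M (\<sigma> (Suc s)) (J s) * M (\<sigma> s) (J s))"
    using assms(1,4) unfolding manin_def by (simp add: mult.assoc)
  then show ?case
    using assms(3) by simp
qed

lemma cdet_cols_comp_transpose:
  assumes "manin emb n m q p M" "Suc s < n" "J s < J (Suc s)" "J (Suc s) < m"
  shows "cdet_cols emb q n M J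
       = emb (- p (J s) (J (Suc s))) * cdet_cols emb q n M (J \<circ> transpose s (Suc s))"
  unfolding cdet_cols_pair_adjacent[OF assms(2), where J = J]
    cdet_cols_pair_adjacent[OF assms(2), where J = "J \<circ> transpose s (Suc s)"] sum_distrib_left
proof (rule sum.cong[OF refl], goal_cases)
  case (1 \<sigma>)
  define P where "P = emb (- p (J s) (J (Suc s)))"
  define X where "X = prod_list (map (\<lambda>k. M (\<sigma> k) (J k)) [0..<s])"
  define Y where "Y = prod_list (map (\<lambda>k. M (\<sigma> k) (J k)) [Suc (Suc s)..<n])"
  have "\<sigma> s < \<sigma> (Suc s)" "\<sigma> (Suc s) < n"
    using 1 assms(2) permutes_in_image[of \<sigma> "{..<n}"] by auto
  then have cross: "M (\<sigma> s) (J s) * M (\<sigma> (Suc s)) (J (Suc s))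
        - emb (q (\<sigma> (Suc s)) (\<sigma> s)) * (M (\<sigma> (Suc s)) (J s) * M (\<sigma> s) (J (Suc s)))
      = P * (M (\<sigma> s) (J (Suc s)) * M (\<sigma> (Suc s)) (J s)
        - emb (q (\<sigma> (Suc s)) (\<sigma> s)) * (M (\<sigma> (Suc s)) (J (Suc s)) * M (\<sigma> s) (J s)))"
    using assms(1,3,4) unfolding manin_def P_def
    by (simp add: emb_mult emb_uminus algebra_simps)
  have outer: "prod_list (map (\<lambda>k. M (\<sigma> k) (J (transpose s (Suc s) k))) [0..<s]) = X"
      "prod_list (map (\<lambda>k. M (\<sigma> k) (J (transpose s (Suc s) k))) [Suc (Suc s)..<n]) = Y"
    unfolding X_def Y_def by (auto intro!: arg_cong[where f = prod_list] map_cong)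
  have "emb e * (X * (P * Z) * Y) = P * (emb e * (X * Z * Y))" for e Z
    unfolding P_def by (metis emb_central_middle emb_left_commute)
  then show ?case
    unfolding comp_apply transpose_apply_first transpose_apply_second outer cross
      P_def[symmetric] X_def[symmetric] Y_def[symmetric] .
qed

lemma cdet_cols_eq_eps_cdet_if_no_inversions:
  assumes "manin emb n n q p M" "\<forall>k<n. J k < n" "inversions n J = {}"
  shows "cdet_cols emb q n M J = emb (eps p n J) * cdet emb q n M"
proof (cases "\<exists>s. Suc s < n \<and> J s = J (Suc s)")
  case True
  then obtain s where s: "Suc s < n" "J s = J (Suc s)"
    by blast
  then have "\<not> inj_on J {..<n}"
    by (metis Suc_lessD lessThan_iff inj_on_contraD n_not_Suc_n)
  then show ?thesis
    using cdet_cols_eq_0_if_adjacent_cols_eq[OF assms(1) s] s(1) assms(2)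
    by (simp add: eps_eq_prod_inversions emb_0)
next
  case False
  have "J a < J b" if "a < b" "b < n" for a b
  proof -
    have "J a \<le> J (Suc a)" "J (Suc a) \<le> J b" "J a \<noteq> J (Suc a)"
      using that assms(3) False unfolding inversions_empty_iff
      by (metis Suc_lessI le_less_Suc_eq less_trans_Suc order.refl)+
    then show ?thesis
      by simp
  qed
  then have id: "J k = k" if "k < n" for k
    using strict_mono_lessThan_eq_self assms(2) that by blast
  then have "inj_on J {..<n}"
    by (simp add: inj_on_def)
  moreover have "cdet_cols emb q n M J = cdet emb q n M"
    unfolding cdet_eq_cdet_cols_id cdet_cols_def
    by (intro sum.cong refl arg_cong2[where f = "(*)"] arg_cong[where f = prod_list] map_cong)
       (simp_all add: id)
  ultimately show ?thesis
    using assms(3) by (simp add: eps_eq_prod_inversions emb_1)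
qed

lemma cdet_cols_eq_eps_cdet:
  assumes "parametric_matrix n p" "manin emb n n q p M" "\<forall>k<n. J k < n"
  shows "cdet_cols emb q n M J = emb (eps p n J) * cdet emb q n M"
  using assms(3)
proof (induction "card (inversions n J)" arbitrary: J rule: less_induct)
  case less
  show ?case
  proof (cases "inversions n J = {}")
    case True
    then show ?thesis
      using cdet_cols_eq_eps_cdet_if_no_inversions[OF assms(2) less.prems] by blast
  next
    case False
    then obtain s where s: "Suc s < n" "J (Suc s) < J s"
      by (rule adjacent_descent_if_inversions)
    define J' where "J' = J \<circ> transpose s (Suc s)"
    have J'_simps: "J' s = J (Suc s)" "J' (Suc s) = J s" "J' \<circ> transpose s (Suc s) = J"
      by (simp_all add: J'_def comp_assoc)
    have J'_less: "J' s < J' (Suc s)"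
      using s(2) by (simp add: J'_simps)
    have "card (inversions n J') < card (inversions n J)"
      using card_inversions_comp_transpose[OF s(1) J'_less] by (simp add: J'_simps)
    moreover have "\<forall>k<n. J' k < n"
      using less.prems s(1) transpose_Suc_lessThan by (simp add: J'_def)
    ultimately have IH: "cdet_cols emb q n M J' = emb (eps p n J') * cdet emb q n M"
      using less.hyps by blast
    have swap: "cdet_cols emb q n M J' = emb (- p (J (Suc s)) (J s)) * cdet_cols emb q n M J"
      using cdet_cols_comp_transpose[OF assms(2) s(1) J'_less] less.prems s(1) by (simp add: J'_simps)
    have inverse: "p (J s) (J (Suc s)) * p (J (Suc s)) (J s) = 1"
      using assms(1) less.prems s(1) unfolding parametric_matrix_def by (meson Suc_lessD)
    have "emb (eps p n J) * cdet emb q n M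
        = emb (- p (J s) (J (Suc s))) * (emb (eps p n J') * cdet emb q n M)"
      using eps_comp_transpose[OF s(1) J'_less, of p] by (simp add: J'_simps emb_mult emb_uminus mult.assoc)
    also have "\<dots> = emb (- p (J s) (J (Suc s))) * (emb (- p (J (Suc s)) (J s)) * cdet_cols emb q n M J)"
      by (simp only: IH[symmetric] swap)
    also have "\<dots> = emb (p (J s) (J (Suc s)) * p (J (Suc s)) (J s)) * cdet_cols emb q n M J"
      by (simp add: emb_mult emb_uminus mult.assoc)
    also have "\<dots> = cdet_cols emb q n M J"
      by (simp add: inverse emb_1)
    finally show ?thesis
      by (rule sym)
  qed
qed

end

theorem mainTheorem1:
  fixes emb :: "complex \<Rightarrow> 'a::ring_1"
    and n :: nat and q p :: "nat \<Rightarrow> nat \<Rightarrow> complex" and M :: "nat \<Rightarrow> nat \<Rightarrow> 'a"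
    and I :: "nat \<Rightarrow> nat"
  assumes "c_algebra_emb emb"
    and "parametric_matrix n q" and "parametric_matrix n p"
    and "manin emb n n q p M"
    and "\<forall>k<n. I k < n"
  shows "(\<Sum>\<sigma> | \<sigma> permutes {..<n}.
            emb (eps q n \<sigma>) * prod_list (map (\<lambda>k. M (\<sigma> k) (I k)) [0..<n]))
         = emb (eps p n I) * cdet emb q n M"
  using cdet_cols_eq_eps_cdet[OF assms(1,3,4,5)] by (simp add: cdet_cols_def)

end
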